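(* Let $G$ be a graph of order $n\ge2$ with no isolated vertices. Then $n-\gamma_2(G)\le\operatorname{ZIR}(G)\le n-\gamma(G)$, and both bounds are sharp.
   Context: $\gamma(G)$ is the domination number (minimum size of a set $D$ with every vertex in $D$ or adjacent to a vertex of $D$). A 2-dominating set is a set $D$ such that every vertex not in $D$ is adjacent to at least two vertices of $D$; $\gamma_2(G)$ is the minimum size of a 2-dominating set. A nonempty $F\subseteq V(G)$ is a fort if every $v\notin F$ has $|N(v)\cap F|\ne1$. A private fort of $x\in S$ relative to $S$ is a fort $F$ with $S\cap F=\{x\}$; $S$ is a ZIr-set if every element of $S$ has a private fort. $\operatorname{ZIR}(G)$ is the maximum cardinality of an inclusion-maximal ZIr-set. *)

theory Defs
  imports Main
begin

definition graph :: "'a set \<Rightarrow> ('a \<Rightarrow> 'a \<Rightarrow> bool) \<Rightarrow> bool" where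
  "graph V E \<longleftrightarrow> finite V \<and> (\<forall>u v. E u v \<longrightarrow> E v u) \<and> (\<forall>v. \<not> E v v)
     \<and> (\<forall>u v. E u v \<longrightarrow> u \<in> V \<and> v \<in> V)"

definition nbhd :: "'a set \<Rightarrow> ('a \<Rightarrow> 'a \<Rightarrow> bool) \<Rightarrow> 'a \<Rightarrow> 'a set" where
  "nbhd V E v = {u \<in> V. E v u}"

definition no_isolated :: "'a set \<Rightarrow> ('a \<Rightarrow> 'a \<Rightarrow> bool) \<Rightarrow> bool" where
  "no_isolated V E \<longleftrightarrow> (\<forall>v\<in>V. nbhd V E v \<noteq> {})"

definition dominating :: "'a set \<Rightarrow> ('a \<Rightarrow> 'a \<Rightarrow> bool) \<Rightarrow> 'a set \<Rightarrow> bool" where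
  "dominating V E D \<longleftrightarrow> D \<subseteq> V \<and> (\<forall>v\<in>V - D. nbhd V E v \<inter> D \<noteq> {})"

definition domination_number :: "'a set \<Rightarrow> ('a \<Rightarrow> 'a \<Rightarrow> bool) \<Rightarrow> nat" where
  "domination_number V E = Min {card D | D. dominating V E D}"

definition two_dominating :: "'a set \<Rightarrow> ('a \<Rightarrow> 'a \<Rightarrow> bool) \<Rightarrow> 'a set \<Rightarrow> bool" where
  "two_dominating V E D \<longleftrightarrow> D \<subseteq> V \<and> (\<forall>v\<in>V - D. card (nbhd V E v \<inter> D) \<ge> 2)"

definition two_domination_number :: "'a set \<Rightarrow> ('a \<Rightarrow> 'a \<Rightarrow> bool) \<Rightarrow> nat" where
  "two_domination_number V E = Min {card D | D. two_dominating V E D}"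

definition fort :: "'a set \<Rightarrow> ('a \<Rightarrow> 'a \<Rightarrow> bool) \<Rightarrow> 'a set \<Rightarrow> bool" where
  "fort V E F \<longleftrightarrow> F \<subseteq> V \<and> F \<noteq> {} \<and> (\<forall>v\<in>V - F. card (nbhd V E v \<inter> F) \<noteq> 1)"

definition private_fort :: "'a set \<Rightarrow> ('a \<Rightarrow> 'a \<Rightarrow> bool) \<Rightarrow> 'a set \<Rightarrow> 'a \<Rightarrow> 'a set \<Rightarrow> bool" where
  "private_fort V E S x F \<longleftrightarrow> fort V E F \<and> S \<inter> F = {x}"

definition ZIr_set :: "'a set \<Rightarrow> ('a \<Rightarrow> 'a \<Rightarrow> bool) \<Rightarrow> 'a set \<Rightarrow> bool" where
  "ZIr_set V E S \<longleftrightarrow> S \<subseteq> V \<and> (\<forall>x\<in>S. \<exists>F. private_fort V E S x F)"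

definition maximal_ZIr_set :: "'a set \<Rightarrow> ('a \<Rightarrow> 'a \<Rightarrow> bool) \<Rightarrow> 'a set \<Rightarrow> bool" where
  "maximal_ZIr_set V E S \<longleftrightarrow> ZIr_set V E S \<and> (\<forall>T. ZIr_set V E T \<and> S \<subseteq> T \<longrightarrow> T = S)"

definition ZIR :: "'a set \<Rightarrow> ('a \<Rightarrow> 'a \<Rightarrow> bool) \<Rightarrow> nat" where
  "ZIR V E = Max {card S | S. maximal_ZIr_set V E S}"

end

theory Submission
  imports Defs
begin

text \<open>If \<open>S\<close> is a ZIr-set, every \<open>v \<in> S\<close> has a neighbour outside \<open>S\<close>: otherwise pick a
  neighbour \<open>u \<in> S\<close> of \<open>v\<close>; the private fort of \<open>u\<close> meets \<open>N(v)\<close> exactly in \<open>u\<close> and misses \<open>v\<close>,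
  so it is not a fort. Hence \<open>V - S\<close> dominates and \<open>ZIR \<le> n - \<gamma>\<close>. Conversely, for a
  2-dominating set \<open>D\<close> and \<open>x \<notin> D\<close>, the set \<open>D \<union> {x}\<close> is a fort (every outside vertex sees
  at least two of its elements), private to \<open>x\<close> relative to \<open>V - D\<close>; so \<open>V - D\<close> is a ZIr-set,
  which extends to a maximal one, giving \<open>n - \<gamma>\<^sub>2 \<le> ZIR\<close>. The 4-cycle has \<open>\<gamma> = \<gamma>\<^sub>2 = 2\<close>,
  so both bounds are attained there.\<close>

lemma finite_cards_of_subsets:
  assumes "finite V" and "\<And>D. P D \<Longrightarrow> D \<subseteq> V"
  shows "finite {card D | D. P D}"
proof -
  have "{card D | D. P D} \<subseteq> card ` Pow V" using assms(2) by auto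
  thus ?thesis using assms(1) finite_subset by blast
qed

lemma domination_number_le:
  assumes "graph V E" and "dominating V E D"
  shows "domination_number V E \<le> card D"
proof -
  have "card D \<in> {card D | D. dominating V E D}" using assms(2) by blast
  thus ?thesis unfolding domination_number_def using assms(1)
    by (intro Min_le finite_cards_of_subsets[of V]) (auto simp: graph_def dominating_def)
qed

lemma two_domination_number_le:
  assumes "graph V E" and "two_dominating V E D"
  shows "two_domination_number V E \<le> card D"
proof -
  have "card D \<in> {card D | D. two_dominating V E D}" using assms(2) by blast
  thus ?thesis unfolding two_domination_number_def using assms(1)
    by (intro Min_le finite_cards_of_subsets[of V]) (auto simp: graph_def two_dominating_def)
qed

lemma domination_number_attained:
  assumes "graph V E"
  obtains D where "dominating V E D" and "domination_number V E = card D"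
proof -
  have "dominating V E V" unfolding dominating_def by auto
  hence "domination_number V E \<in> {card D | D. dominating V E D}"
    unfolding domination_number_def using assms
    by (intro Min_in finite_cards_of_subsets[of V]) (auto simp: graph_def dominating_def)
  thus ?thesis using that by blast
qed

lemma two_domination_number_attained:
  assumes "graph V E"
  obtains D where "two_dominating V E D" and "two_domination_number V E = card D"
proof -
  have "two_dominating V E V" unfolding two_dominating_def by auto
  hence "two_domination_number V E \<in> {card D | D. two_dominating V E D}"
    unfolding two_domination_number_def using assms
    by (intro Min_in finite_cards_of_subsets[of V]) (auto simp: graph_def two_dominating_def)
  thus ?thesis using that by blast
qed

lemma ZIr_set_extends_to_maximal:
  assumes "graph V E" and "ZIr_set V E S"
  obtains T where "maximal_ZIr_set V E T" and "S \<subseteq> T"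
proof -
  let ?C = "{T. ZIr_set V E T \<and> S \<subseteq> T}"
  have "?C \<subseteq> Pow V" unfolding ZIr_set_def by auto
  hence "finite ?C" using assms(1) unfolding graph_def by (meson finite_Pow_iff finite_subset)
  moreover have "?C \<noteq> {}" using assms(2) by auto
  ultimately obtain T where T: "T \<in> ?C" and max: "\<forall>T'\<in>?C. T \<le> T' \<longrightarrow> T = T'"
    by (meson finite_has_maximal)
  have "maximal_ZIr_set V E T"
    unfolding maximal_ZIr_set_def using T max by auto
  thus ?thesis using that T by blast
qed

lemma finite_ZIR_candidates:
  assumes "graph V E"
  shows "finite {card S | S. maximal_ZIr_set V E S}"
  using assms
  by (intro finite_cards_of_subsets[of V]) (auto simp: graph_def maximal_ZIr_set_def ZIr_set_def)

lemma ZIR_attained: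
  assumes "graph V E"
  obtains S where "maximal_ZIr_set V E S" and "ZIR V E = card S"
proof -
  have "ZIr_set V E {}" unfolding ZIr_set_def by auto
  then obtain T where "maximal_ZIr_set V E T"
    using ZIr_set_extends_to_maximal[OF assms] by blast
  hence "ZIR V E \<in> {card S | S. maximal_ZIr_set V E S}"
    unfolding ZIR_def by (intro Max_in finite_ZIR_candidates[OF assms]) auto
  thus ?thesis using that by blast
qed

lemma card_le_ZIR:
  assumes "graph V E" and "maximal_ZIr_set V E S"
  shows "card S \<le> ZIR V E"
  unfolding ZIR_def using assms by (intro Max_ge finite_ZIR_candidates) auto

lemma ZIr_set_complement_dominating:
  assumes g: "graph V E" and ni: "no_isolated V E" and S: "ZIr_set V E S"
  shows "dominating V E (V - S)"
  unfolding dominating_def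
proof (intro conjI ballI)
  fix v assume "v \<in> V - (V - S)"
  hence vV: "v \<in> V" and vS: "v \<in> S" by auto
  show "nbhd V E v \<inter> (V - S) \<noteq> {}"
  proof
    assume inside: "nbhd V E v \<inter> (V - S) = {}"
    obtain u where u: "u \<in> nbhd V E v" using ni vV unfolding no_isolated_def by blast
    hence "u \<in> S" and "E v u" using inside unfolding nbhd_def by auto
    then obtain F where F: "fort V E F" and SF: "S \<inter> F = {u}"
      using S unfolding ZIr_set_def private_fort_def by blast
    have "v \<noteq> u" using g \<open>E v u\<close> unfolding graph_def by metis
    hence "v \<in> V - F" using vV vS SF by blast
    hence "card (nbhd V E v \<inter> F) \<noteq> 1" using F unfolding fort_def by blast
    moreover have "nbhd V E v \<inter> F = {u}"
      using u SF inside unfolding nbhd_def by blast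
    ultimately show False by simp
  qed
qed blast

lemma two_dominating_complement_ZIr_set:
  assumes g: "graph V E" and D: "two_dominating V E D"
  shows "ZIr_set V E (V - D)"
  unfolding ZIr_set_def
proof (intro conjI ballI)
  fix x assume x: "x \<in> V - D"
  have "fort V E (insert x D)"
    unfolding fort_def
  proof (intro conjI ballI)
    show "insert x D \<subseteq> V" using D x unfolding two_dominating_def by auto
    fix v assume v: "v \<in> V - insert x D"
    have "2 \<le> card (nbhd V E v \<inter> D)" using D v unfolding two_dominating_def by auto
    also have "\<dots> \<le> card (nbhd V E v \<inter> insert x D)"
      using g unfolding graph_def nbhd_def by (intro card_mono) auto
    finally show "card (nbhd V E v \<inter> insert x D) \<noteq> 1" by linarith
  qed auto
  moreover have "(V - D) \<inter> insert x D = {x}" using x by auto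
  ultimately show "\<exists>F. private_fort V E (V - D) x F" unfolding private_fort_def by blast
qed blast

theorem ZIR_le_card_minus_domination_number:
  assumes g: "graph V E" and "no_isolated V E"
  shows "ZIR V E \<le> card V - domination_number V E"
proof -
  obtain S where S: "maximal_ZIr_set V E S" and ZIR: "ZIR V E = card S"
    using ZIR_attained[OF g] .
  have "ZIr_set V E S" using S unfolding maximal_ZIr_set_def by blast
  hence "domination_number V E \<le> card (V - S)"
    using assms by (intro domination_number_le ZIr_set_complement_dominating)
  moreover have "S \<subseteq> V" and "finite V"
    using \<open>ZIr_set V E S\<close> g unfolding ZIr_set_def graph_def by auto
  ultimately show ?thesis
    using ZIR card_Diff_subset[of S V] card_mono[of V S] finite_subset by fastforce
qed

theorem card_minus_two_domination_number_le_ZIR: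
  assumes g: "graph V E"
  shows "card V - two_domination_number V E \<le> ZIR V E"
proof -
  obtain D where D: "two_dominating V E D" and \<gamma>\<^sub>2: "two_domination_number V E = card D"
    using two_domination_number_attained[OF g] .
  obtain T where T: "maximal_ZIr_set V E T" and "V - D \<subseteq> T"
    using ZIr_set_extends_to_maximal[OF g two_dominating_complement_ZIr_set[OF g D]] .
  have "finite V" using g unfolding graph_def by blast
  hence "finite D" using D finite_subset unfolding two_dominating_def by blast
  hence "card V - card D \<le> card (V - D)" by (rule diff_card_le_card_Diff)
  also have "\<dots> \<le> card T"
    using T \<open>V - D \<subseteq> T\<close> \<open>finite V\<close>
    by (intro card_mono) (auto simp: maximal_ZIr_set_def ZIr_set_def finite_subset)
  also have "\<dots> \<le> ZIR V E" using card_le_ZIR[OF g T] .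
  finally show ?thesis using \<gamma>\<^sub>2 by simp
qed

definition cycle4_edge :: "nat \<Rightarrow> nat \<Rightarrow> bool" where
  "cycle4_edge u v \<longleftrightarrow> u < 4 \<and> v < 4 \<and> odd (u + v)"

lemma graph_cycle4: "graph {0..<4} cycle4_edge"
  unfolding graph_def cycle4_edge_def by (auto simp: add.commute)

lemma nbhd_cycle4: "nbhd {0..<4} cycle4_edge v = {u. u < 4 \<and> v < 4 \<and> odd (u + v)}"
  unfolding nbhd_def cycle4_edge_def by auto

lemma no_isolated_cycle4: "no_isolated {0..<4} cycle4_edge"
  unfolding no_isolated_def nbhd_cycle4 by (auto intro!: exI[of _ "if even v then 1 else 0" for v])

lemma two_domination_number_cycle4: "two_domination_number {0..<4} cycle4_edge \<le> 2"
proof -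
  have "two_dominating {0..<4} cycle4_edge {0, 2}"
    unfolding two_dominating_def nbhd_cycle4
  proof (intro conjI ballI)
    fix v :: nat assume "v \<in> {0..<4} - {0, 2}"
    hence "{u. u < 4 \<and> v < 4 \<and> odd (u + v)} \<inter> {0, 2} = {0, 2}" by auto
    thus "2 \<le> card ({u. u < 4 \<and> v < 4 \<and> odd (u + v)} \<inter> {0, 2})" by simp
  qed auto
  thus ?thesis using two_domination_number_le[OF graph_cycle4] by fastforce
qed

text \<open>A single vertex \<open>x\<close> of the 4-cycle does not dominate the opposite vertex \<open>x + 2 mod 4\<close>.\<close>
lemma domination_number_cycle4: "2 \<le> domination_number {0..<4} cycle4_edge"
proof -
  obtain D where D: "dominating {0..<4} cycle4_edge D"
    and \<gamma>: "domination_number {0..<4} cycle4_edge = card D"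
    using domination_number_attained[OF graph_cycle4] .
  have "finite D" using D unfolding dominating_def by (auto intro: finite_subset)
  have "\<not> dominating {0..<4} cycle4_edge {x}" for x :: nat
  proof
    assume dom: "dominating {0..<4} cycle4_edge {x}"
    hence "x < 4" unfolding dominating_def by auto
    hence "x = 0 \<or> x = 1 \<or> x = 2 \<or> x = 3" by auto
    hence "(x + 2) mod 4 \<in> {0..<4} - {x}" and "even (x + (x + 2) mod 4)" by (elim disjE; simp)+
    hence "nbhd {0..<4} cycle4_edge ((x + 2) mod 4) \<inter> {x} = {}"
      unfolding nbhd_cycle4 by (auto simp: add.commute)
    thus False using dom \<open>(x + 2) mod 4 \<in> {0..<4} - {x}\<close> unfolding dominating_def by blast
  qed
  hence "card D \<noteq> 1" using D by (auto simp: card_1_singleton_iff)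
  moreover have "\<not> dominating {0..<4} cycle4_edge {}"
    unfolding dominating_def by (simp add: exI[of _ 0])
  hence "card D \<noteq> 0" using D \<open>finite D\<close> by auto
  ultimately show ?thesis using \<gamma> by linarith
qed

lemma ZIR_cycle4:
  "ZIR {0..<4} cycle4_edge = card {0..<4::nat} - two_domination_number {0..<4} cycle4_edge"
  "ZIR {0..<4} cycle4_edge = card {0..<4::nat} - domination_number {0..<4} cycle4_edge"
  using card_minus_two_domination_number_le_ZIR[OF graph_cycle4]
    ZIR_le_card_minus_domination_number[OF graph_cycle4 no_isolated_cycle4]
    two_domination_number_cycle4 domination_number_cycle4
  by simp_all

theorem proposition4p1:
  shows "(\<forall>(V :: 'a set) E. graph V E \<and> card V \<ge> 2 \<and> no_isolated V E \<longrightarrow>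
            card V - two_domination_number V E \<le> ZIR V E \<and>
            ZIR V E \<le> card V - domination_number V E)
       \<and> (\<exists>(V :: nat set) E. graph V E \<and> card V \<ge> 2 \<and> no_isolated V E \<and>
            ZIR V E = card V - two_domination_number V E)
       \<and> (\<exists>(V :: nat set) E. graph V E \<and> card V \<ge> 2 \<and> no_isolated V E \<and>
            ZIR V E = card V - domination_number V E)"
proof (intro conjI allI impI)
  fix V :: "'a set" and E
  assume "graph V E \<and> card V \<ge> 2 \<and> no_isolated V E"
  thus "card V - two_domination_number V E \<le> ZIR V E" "ZIR V E \<le> card V - domination_number V E"
    using card_minus_two_domination_number_le_ZIR ZIR_le_card_minus_domination_number by auto
next
  have "card {0..<4::nat} \<ge> 2" by simp
  thus "\<exists>(V :: nat set) E. graph V E \<and> card V \<ge> 2 \<and> no_isolated V E \<and>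
          ZIR V E = card V - two_domination_number V E"
    and "\<exists>(V :: nat set) E. graph V E \<and> card V \<ge> 2 \<and> no_isolated V E \<and>
          ZIR V E = card V - domination_number V E"
    using graph_cycle4 no_isolated_cycle4 ZIR_cycle4 by blast+
qed

end
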